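(* Consider a market in which every hospital's utility is proportional to total wage, i.e. for each $h\in H$ there is $\gamma_h>0$ with $f_h(Y)=\gamma_h w_h(Y)$ for all $Y\subseteq X_h$. For each $h$, let $\mathrm{Ch}_h$ be the choice function that, given $X'\subseteq X_h$ (with $\mathrm{Ch}_h(\emptyset)=\emptyset$), sorts $X'$ in non-decreasing order of wage (ties broken by a fixed order) as $x^{(1)},\dots,x^{(|X'|)}$, sets $Y=\{x^{(|X'|)}\}$, for $i=1,\dots,|X'|-1$ adds $x^{(i)}$ to $Y$ if $w_h(Y\cup\{x^{(i)}\})<1.5\,B_h$, and returns $Y$. Then the generalized deferred acceptance mechanism with these choice functions produces a $B'_H$-stable matching for some $B'_H$ with $B_h\le B'_h\le1.5\,B_h$ for every $h\in H$.
   Context: A market consists of a finite set of doctors $D$, a finite set of hospitals $H$, a finite set of contracts $X\subseteq D\times H\times\mathbb{R}_{>0}$ (contract $x=(d,h,w)$ has doctor $x_D=d$, hospital $x_H=h$, wage $x_W=w$), strict preferences $\succ_d$ of each doctor $d$ over $X_d\cup\{\emptyset\}$, utilities $f_h$ of each hospital on subsets of $X_h$, and budgets $B_h>0$ with $0<x_W\le B_h$ for all $x\in X_h$. For $Y\subseteq X$: $Y_d=\{x\in Y:x_D=d\}$, $Y_h=\{x\in Y:x_H=h\}$, $w_h(Y)=\sum_{x\in Y_h}x_W$. A matching is $Y\subseteq X$ with $|Y_d|\le1$ for all $d$. Given $B'_H=(B'_h)_h$, a matching $Y$ is $B'_H$-feasible if $w_h(Y)\le B'_h$ for all $h$; a matching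 $Z\subseteq X_h$ blocks $Y$ if every doctor $x_D$ with $x\in Z\setminus Y$ strictly prefers $x$ to her contract in $Y$ (or to $\emptyset$), $f_h(Z)>f_h(Y_h)$ and $w_h(Z)\le B'_h$; $Y$ is $B'_H$-stable if it is $B'_H$-feasible and not blocked by any $h$ and $Z\subseteq X_h$. Generalized deferred acceptance with hospital choice functions $\mathrm{Ch}_h$: let $\mathrm{Ch}_H(Y)=\bigcup_h\mathrm{Ch}_h(Y_h)$; $\mathrm{Ch}_d(Y)=\{x\}$ for the $\succ_d$-best $x\in Y_d$ if $x\succ_d\emptyset$, else $\emptyset$; $\mathrm{Ch}_D(Y)=\bigcup_d\mathrm{Ch}_d(Y_d)$. Set $R^{(0)}=\emptyset$; for $i=1,2,\dots$: $Y^{(i)}=\mathrm{Ch}_D(X\setminus R^{(i-1)})$, $Z^{(i)}=\mathrm{Ch}_H(Y^{(i)})$, $R^{(i)}=R^{(i-1)}\cup(Y^{(i)}\setminus Z^{(i)})$; if $Y^{(i)}=Z^{(i)}$, output $Y^{(i)}$. *)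

theory Defs
  imports Complex_Main
begin

type_synonym ('d, 'h) contract = "'d \<times> 'h \<times> real"

definition cD :: "('d, 'h) contract \<Rightarrow> 'd" where "cD x = fst x"
definition cH :: "('d, 'h) contract \<Rightarrow> 'h" where "cH x = fst (snd x)"
definition cW :: "('d, 'h) contract \<Rightarrow> real" where "cW x = snd (snd x)"

definition Yd :: "('d, 'h) contract set \<Rightarrow> 'd \<Rightarrow> ('d, 'h) contract set" where
  "Yd Y d = {x \<in> Y. cD x = d}"
definition Yh :: "('d, 'h) contract set \<Rightarrow> 'h \<Rightarrow> ('d, 'h) contract set" where
  "Yh Y h = {x \<in> Y. cH x = h}"
definition wh :: "'h \<Rightarrow> ('d, 'h) contract set \<Rightarrow> real" where
  "wh h Y = (\<Sum>x\<in>Yh Y h. cW x)"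

text \<open>The market: doctors D, hospitals H, contracts X, strict doctor preferences
  (pref d is the strict relation \<open>\<succ>_d\<close> on X_d \<union> {\<emptyset>}, \<emptyset> rendered as None),
  hospital utilities f, budgets B.\<close>
definition market ::
  "'d set \<Rightarrow> 'h set \<Rightarrow> ('d, 'h) contract set \<Rightarrow>
   ('d \<Rightarrow> (('d, 'h) contract option \<times> ('d, 'h) contract option) set) \<Rightarrow>
   ('h \<Rightarrow> ('d, 'h) contract set \<Rightarrow> real) \<Rightarrow> ('h \<Rightarrow> real) \<Rightarrow> bool" where
  "market D H X pref f B \<longleftrightarrow>
     finite D \<and> finite H \<and> finite X \<and>
     X \<subseteq> D \<times> H \<times> {w. w > 0} \<and>
     (\<forall>d\<in>D. strict_linear_order_on (insert None (Some ` Yd X d)) (pref d) \<and>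
             pref d \<subseteq> (insert None (Some ` Yd X d)) \<times> (insert None (Some ` Yd X d))) \<and>
     (\<forall>h\<in>H. B h > 0) \<and>
     (\<forall>x\<in>X. 0 < cW x \<and> cW x \<le> B (cH x))"

definition is_matching :: "'d set \<Rightarrow> ('d, 'h) contract set \<Rightarrow> bool" where
  "is_matching D Y \<longleftrightarrow> (\<forall>d\<in>D. card (Yd Y d) \<le> 1) \<and> (\<forall>x\<in>Y. cD x \<in> D) \<and> finite Y"

definition cur :: "('d, 'h) contract set \<Rightarrow> 'd \<Rightarrow> ('d, 'h) contract option" where
  "cur Y d = (if Yd Y d = {} then None else Some (the_elem (Yd Y d)))"

definition feasible :: "'d set \<Rightarrow> 'h set \<Rightarrow> ('d, 'h) contract set \<Rightarrow> ('h \<Rightarrow> real)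
    \<Rightarrow> ('d, 'h) contract set \<Rightarrow> bool" where
  "feasible D H X B' Y \<longleftrightarrow> Y \<subseteq> X \<and> is_matching D Y \<and> (\<forall>h\<in>H. wh h Y \<le> B' h)"

definition blocks ::
  "'d set \<Rightarrow> ('d, 'h) contract set \<Rightarrow>
   ('d \<Rightarrow> (('d, 'h) contract option \<times> ('d, 'h) contract option) set) \<Rightarrow>
   ('h \<Rightarrow> ('d, 'h) contract set \<Rightarrow> real) \<Rightarrow> ('h \<Rightarrow> real) \<Rightarrow>
   'h \<Rightarrow> ('d, 'h) contract set \<Rightarrow> ('d, 'h) contract set \<Rightarrow> bool" where
  "blocks D X pref f B' h Z Y \<longleftrightarrow>
     Z \<subseteq> Yh X h \<and> is_matching D Z \<and>
     (\<forall>x\<in>Z - Y. (Some x, cur Y (cD x)) \<in> pref (cD x)) \<and>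
     f h Z > f h (Yh Y h) \<and> wh h Z \<le> B' h"

definition stable ::
  "'d set \<Rightarrow> 'h set \<Rightarrow> ('d, 'h) contract set \<Rightarrow>
   ('d \<Rightarrow> (('d, 'h) contract option \<times> ('d, 'h) contract option) set) \<Rightarrow>
   ('h \<Rightarrow> ('d, 'h) contract set \<Rightarrow> real) \<Rightarrow> ('h \<Rightarrow> real) \<Rightarrow>
   ('d, 'h) contract set \<Rightarrow> bool" where
  "stable D H X pref f B' Y \<longleftrightarrow> feasible D H X B' Y \<and>
     \<not> (\<exists>h\<in>H. \<exists>Z. blocks D X pref f B' h Z Y)"

definition ChD ::
  "'d set \<Rightarrow> ('d \<Rightarrow> (('d, 'h) contract option \<times> ('d, 'h) contract option) set) \<Rightarrow>
   ('d, 'h) contract set \<Rightarrow> ('d, 'h) contract set" where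
  "ChD D pref Y = (\<Union>d\<in>D. {x \<in> Yd Y d. (Some x, None) \<in> pref d \<and>
       (\<forall>y\<in>Yd Y d. y \<noteq> x \<longrightarrow> (Some x, Some y) \<in> pref d)})"

definition key_less :: "(('d, 'h) contract \<times> ('d, 'h) contract) set \<Rightarrow>
    ('d, 'h) contract \<Rightarrow> ('d, 'h) contract \<Rightarrow> bool" where
  "key_less tie a b \<longleftrightarrow> cW a < cW b \<or> (cW a = cW b \<and> (a, b) \<in> tie)"

definition sort_by :: "('a \<Rightarrow> 'a \<Rightarrow> bool) \<Rightarrow> 'a set \<Rightarrow> 'a list" where
  "sort_by lt A = (THE xs. set xs = A \<and> sorted_wrt lt xs)"

definition greedy :: "real \<Rightarrow> ('d, 'h) contract list \<Rightarrow> ('d, 'h) contract set" where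
  "greedy bound xs = (if xs = [] then {} else
     foldl (\<lambda>Y x. if (\<Sum>y\<in>insert x Y. cW y) < bound then insert x Y else Y)
       {last xs} (butlast xs))"

definition Chh :: "('h \<Rightarrow> (('d, 'h) contract \<times> ('d, 'h) contract) set) \<Rightarrow> ('h \<Rightarrow> real) \<Rightarrow>
    'h \<Rightarrow> ('d, 'h) contract set \<Rightarrow> ('d, 'h) contract set" where
  "Chh tie B h X' = greedy (3/2 * B h) (sort_by (key_less (tie h)) X')"

definition ChH :: "'h set \<Rightarrow> ('h \<Rightarrow> (('d, 'h) contract \<times> ('d, 'h) contract) set) \<Rightarrow>
    ('h \<Rightarrow> real) \<Rightarrow> ('d, 'h) contract set \<Rightarrow> ('d, 'h) contract set" where
  "ChH H tie B Y = (\<Union>h\<in>H. Chh tie B h (Yh Y h))"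

text \<open>Generalized deferred acceptance. DA_R i is R^(i); the proposals of round i+1
  are DA_Y i = Y^(i+1) and the accepted ones DA_Z i = Z^(i+1).\<close>
fun DA_R :: "'d set \<Rightarrow> 'h set \<Rightarrow> ('d, 'h) contract set \<Rightarrow>
   ('d \<Rightarrow> (('d, 'h) contract option \<times> ('d, 'h) contract option) set) \<Rightarrow>
   ('h \<Rightarrow> (('d, 'h) contract \<times> ('d, 'h) contract) set) \<Rightarrow> ('h \<Rightarrow> real) \<Rightarrow>
   nat \<Rightarrow> ('d, 'h) contract set" where
  "DA_R D H X pref tie B 0 = {}"
| "DA_R D H X pref tie B (Suc i) =
     (let Yi = ChD D pref (X - DA_R D H X pref tie B i)
      in DA_R D H X pref tie B i \<union> (Yi - ChH H tie B Yi))"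

definition DA_Y where
  "DA_Y D H X pref tie B i = ChD D pref (X - DA_R D H X pref tie B i)"
definition DA_Z where
  "DA_Z D H X pref tie B i = ChH H tie B (DA_Y D H X pref tie B i)"

end

theory Submission
  imports Defs
begin

text \<open>Deferred acceptance terminates because every round that is not a fixed point rejects a
  new contract. Let \<open>Y\<close> be the outcome and \<open>B'\<^sub>h = max B\<^sub>h (w\<^sub>h Y)\<close>; the greedy choice
  keeps \<open>w\<^sub>h Y \<le> 3/2 B\<^sub>h\<close>, so \<open>Y\<close> is \<open>B'\<close>-feasible.

  The key invariant: once \<open>h\<close> rejects \<open>x\<close>, the contracts \<open>h\<close> holds in every later round
  contain some \<open>M\<close> above \<open>x\<close> in \<open>h\<close>'s order such that \<open>x\<close>, \<open>M\<close> and the held contracts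
  below \<open>x\<close> cost at least \<open>3/2 B\<^sub>h\<close>.

  Suppose \<open>Z\<close> blocks \<open>Y\<close> at \<open>h\<close>. Utility is proportional to wages, so \<open>w Z > w\<^sub>h Y\<close>; hence
  \<open>w\<^sub>h Y < B\<^sub>h\<close>, since otherwise \<open>B'\<^sub>h = w\<^sub>h Y\<close>. Every \<open>x \<in> Z - Y\<close> is preferred by its doctor
  to what she holds, so \<open>h\<close> has rejected it, and the invariant together with \<open>w\<^sub>h Y < B\<^sub>h\<close>
  gives \<open>B\<^sub>h / 2 < w x \<le> w M\<close> for some \<open>M \<in> Y\<close>. As \<open>w Z \<le> B\<^sub>h\<close>, \<open>Z\<close> contains only one such
  \<open>x\<close> and not \<open>M\<close>, whence \<open>w Z \<le> w x + w\<^sub>h Y - w M \<le> w\<^sub>h Y\<close>, a contradiction.\<close>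

lemma sorted_wrt_irreflp_distinct: "irreflp lt \<Longrightarrow> sorted_wrt lt xs \<Longrightarrow> distinct xs"
  by (induction xs) (auto dest: irreflpD)

lemma sorted_wrt_set_unique:
  assumes irr: "irreflp lt" and tr: "transp lt"
  shows "sorted_wrt lt xs \<Longrightarrow> sorted_wrt lt ys \<Longrightarrow> set xs = set ys \<Longrightarrow> xs = ys"
proof (induction xs arbitrary: ys)
  case Nil
  then show ?case by simp
next
  case (Cons a xs)
  then obtain b ys' where ys: "ys = b # ys'"
    by (cases ys) auto
  have "a = b"
  proof (rule ccontr)
    assume "a \<noteq> b"
    then have "lt a b" "lt b a"
      using Cons.prems ys by auto
    then show False
      using irr tr by (blast dest: irreflpD transpD)
  qed
  moreover have "a \<notin> set xs" "b \<notin> set ys'"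
    using Cons.prems ys irr by (auto dest: irreflpD)
  ultimately have "set xs = set ys'"
    using Cons.prems(3) ys by auto
  then show ?case
    using Cons \<open>a = b\<close> ys by simp
qed

lemma sorted_wrt_list_exists:
  assumes tr: "transp lt" and tot: "totalp_on A lt" and fin: "finite A"
  shows "\<exists>xs. set xs = A \<and> sorted_wrt lt xs"
  using fin tot
proof (induction A rule: finite_induct)
  case empty
  then show ?case by simp
next
  case (insert a F)
  then obtain xs where xs: "set xs = F" "sorted_wrt lt xs"
    using totalp_on_subset by blast
  define ys where "ys = filter (\<lambda>y. lt y a) xs @ a # filter (lt a) xs"
  have "set ys = insert a F"
    using xs(1) insert.hyps(2) insert.prems by (auto simp: ys_def dest: totalp_onD)
  moreover have "sorted_wrt lt ys"
    using xs(2) tr by (auto simp: ys_def sorted_wrt_append sorted_wrt_filter dest: transpD)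
  ultimately show ?case by blast
qed

lemma sort_by_correct:
  assumes "irreflp lt" "transp lt" "totalp_on A lt" "finite A"
  shows "set (sort_by lt A) = A \<and> sorted_wrt lt (sort_by lt A)"
proof -
  have "\<exists>!xs. set xs = A \<and> sorted_wrt lt xs"
    using sorted_wrt_list_exists[of lt A] sorted_wrt_set_unique[of lt] assms by metis
  then show ?thesis
    unfolding sort_by_def by (rule theI')
qed

lemma exists_least_wrt:
  assumes "irreflp lt" "transp lt" "totalp_on A lt" "finite A" "A \<noteq> {}"
  shows "\<exists>a\<in>A. \<forall>b\<in>A. b \<noteq> a \<longrightarrow> lt a b"
proof -
  obtain a xs where "sort_by lt A = a # xs"
    using sort_by_correct[OF assms(1-4)] assms(5) by (cases "sort_by lt A") auto
  then show ?thesis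
    using sort_by_correct[OF assms(1-4)] by force
qed

section \<open>Greedy selection along a sorted list\<close>

abbreviation wages :: "('d, 'h) contract set \<Rightarrow> real" where
  "wages A \<equiv> \<Sum>x\<in>A. cW x"

definition greedy_step :: "real \<Rightarrow> ('d, 'h) contract set \<Rightarrow> ('d, 'h) contract \<Rightarrow> ('d, 'h) contract set" where
  "greedy_step b Y x = (if wages (insert x Y) < b then insert x Y else Y)"

lemma greedy_eq_foldl:
  "xs \<noteq> [] \<Longrightarrow> greedy b xs = foldl (greedy_step b) {last xs} (butlast xs)"
  unfolding greedy_def greedy_step_def[abs_def] by simp

lemma subset_foldl_greedy_step: "T \<subseteq> foldl (greedy_step b) T ys"
  by (induction ys arbitrary: T) (auto simp: greedy_step_def, blast)

lemma foldl_greedy_step_subset: "foldl (greedy_step b) T ys \<subseteq> T \<union> set ys"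
proof (induction ys arbitrary: T)
  case (Cons a ys)
  then show ?case
    using Cons.IH[of "greedy_step b T a"] by (auto simp: greedy_step_def)
qed simp

lemma foldl_greedy_step_wages_less:
  "wages T < b \<Longrightarrow> wages (foldl (greedy_step b) T ys) < b"
  by (induction ys arbitrary: T) (auto simp: greedy_step_def)

lemma foldl_greedy_step_prefix:
  assumes "distinct (us @ y # vs)"
  shows "foldl (greedy_step b) T us = T \<union> (foldl (greedy_step b) T (us @ y # vs) \<inter> set us)"
proof -
  let ?A = "foldl (greedy_step b) T us"
  let ?F = "foldl (greedy_step b) T (us @ y # vs)"
  have F: "?F = foldl (greedy_step b) (greedy_step b ?A y) vs"
    by simp
  have "?A \<subseteq> greedy_step b ?A y"
    by (auto simp: greedy_step_def)
  also have "\<dots> \<subseteq> ?F"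
    unfolding F by (rule subset_foldl_greedy_step)
  finally have "?A \<subseteq> ?F" .
  moreover have "?A \<subseteq> T \<union> set us" "T \<subseteq> ?A"
    by (rule foldl_greedy_step_subset, rule subset_foldl_greedy_step)
  moreover have "?F \<subseteq> insert y ?A \<union> set vs"
    unfolding F using foldl_greedy_step_subset[of b "greedy_step b ?A y" vs]
    by (auto simp: greedy_step_def split: if_splits)
  moreover have "y \<notin> set us" "set us \<inter> set vs = {}"
    using assms by auto
  ultimately show ?thesis
    by blast
qed

lemma foldl_greedy_step_rejected:
  assumes "y \<notin> foldl (greedy_step b) T (us @ y # vs)"
  shows "b \<le> wages (insert y (foldl (greedy_step b) T us))"
proof (rule ccontr)
  assume "\<not> ?thesis"
  then have "y \<in> greedy_step b (foldl (greedy_step b) T us) y"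
    by (simp add: greedy_step_def)
  then show False
    using assms subset_foldl_greedy_step by fastforce
qed

lemma greedy_subset: "greedy b xs \<subseteq> set xs"
proof (cases xs rule: rev_cases)
  case (snoc ys y)
  then show ?thesis
    using foldl_greedy_step_subset[of b "{y}" ys] by (simp add: greedy_eq_foldl)
qed (simp add: greedy_def)

lemma last_in_greedy: "xs \<noteq> [] \<Longrightarrow> last xs \<in> greedy b xs"
  using subset_foldl_greedy_step by (fastforce simp: greedy_eq_foldl)

lemma greedy_wages_less: "xs \<noteq> [] \<Longrightarrow> cW (last xs) < b \<Longrightarrow> wages (greedy b xs) < b"
  by (simp add: greedy_eq_foldl foldl_greedy_step_wages_less)

lemma greedy_rejected:
  assumes irr: "irreflp lt" and tr: "transp lt" and sorted: "sorted_wrt lt xs"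
    and y: "y \<in> set xs - greedy b xs"
  shows "b \<le> cW y + cW (last xs) + wages {z \<in> greedy b xs. lt z y}"
proof -
  define M where "M = last xs"
  define G where "G = greedy b xs"
  have ne: "xs \<noteq> []"
    using y by auto
  have "y \<noteq> M"
    using y last_in_greedy[OF ne] by (auto simp: M_def)
  then have "y \<in> set (butlast xs)"
    using y by (cases xs rule: rev_cases) (auto simp: M_def)
  then obtain us vs where bl: "butlast xs = us @ y # vs"
    by (meson split_list)
  have xs: "xs = us @ y # vs @ [M]"
    using append_butlast_last_id[OF ne] bl by (simp add: M_def)
  have dist: "distinct xs"
    using sorted_wrt_irreflp_distinct[OF irr sorted] .
  define A where "A = foldl (greedy_step b) {M} us"
  have G: "G = foldl (greedy_step b) {M} (us @ y # vs)"
    by (simp add: G_def greedy_eq_foldl[OF ne] bl M_def)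
  have bound: "b \<le> wages (insert y A)"
    using foldl_greedy_step_rejected[of y b "{M}" us vs] y G by (simp add: A_def G_def)
  have A: "A = {M} \<union> (G \<inter> set us)"
    unfolding A_def G using foldl_greedy_step_prefix[of us y vs] dist xs by simp
  have below: "{z \<in> G. lt z y} = G \<inter> set us"
  proof -
    have "G \<subseteq> set xs"
      using greedy_subset by (simp add: G_def)
    moreover have "lt z y \<longleftrightarrow> z \<in> set us" if "z \<in> set xs" for z
      using that sorted irr tr unfolding xs by (auto simp: sorted_wrt_append dest: irreflpD transpD)
    ultimately show ?thesis by blast
  qed
  have "M \<notin> set us" "y \<notin> A"
    using dist y unfolding xs A by (auto simp: G_def)
  then show ?thesis
    using bound A below by (simp add: M_def G_def add.assoc)
qed

lemma sum_le_if_heavy_newcomers: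
  fixes w :: "'a \<Rightarrow> real"
  assumes fin: "finite Y" "finite Z" and nonneg: "\<And>z. z \<in> Y \<union> Z \<Longrightarrow> 0 \<le> w z"
    and Z_le: "sum w Z \<le> b"
    and heavy: "\<And>x. x \<in> Z - Y \<Longrightarrow> \<exists>M\<in>Y. b / 2 < w x \<and> w x \<le> w M"
  shows "sum w Z \<le> sum w Y"
proof (cases "Z \<subseteq> Y")
  case True
  then show ?thesis
    using fin nonneg by (intro sum_mono2) auto
next
  case False
  then obtain x where x: "x \<in> Z - Y"
    by blast
  then obtain M where M: "M \<in> Y" "b / 2 < w x" "w x \<le> w M"
    using heavy by blast
  have pair: "w a + w c \<le> sum w Z" if "a \<in> Z" "c \<in> Z" "a \<noteq> c" for a c
    using sum_mono2[OF fin(2), of "{a, c}" w] that nonneg by auto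
  \<comment> \<open>two elements heavier than \<open>b / 2\<close> do not fit into \<open>Z\<close>\<close>
  have "Z - Y \<subseteq> {x}"
  proof
    fix x' assume x': "x' \<in> Z - Y"
    show "x' \<in> {x}"
      using pair[of x x'] heavy[OF x'] x x' M Z_le by (cases "x' = x") force+
  qed
  moreover have "M \<notin> Z"
    using pair[of x M] x M Z_le by auto
  ultimately have "Z \<subseteq> insert x (Y - {M})"
    by blast
  then have "sum w Z \<le> sum w (insert x (Y - {M}))"
    using fin nonneg x by (intro sum_mono2) auto
  also have "\<dots> = w x + sum w Y - w M"
    using x fin M(1) by (simp add: sum_diff1)
  finally show ?thesis
    using M by linarith
qed

lemma key_less_strict_total:
  assumes "strict_linear_order_on A r"
  shows "irreflp (key_less r)" "transp (key_less r)" "totalp_on A (key_less r)"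
proof -
  have r: "irrefl r" "trans r" "total_on A r"
    using assms by (simp_all add: strict_linear_order_on_def)
  show "irreflp (key_less r)"
    using r(1) by (auto simp: key_less_def irreflp_def dest: irreflD)
  show "transp (key_less r)"
    using r(2) by (auto simp: key_less_def transp_def dest: transD)
  show "totalp_on A (key_less r)"
    using r(3) by (auto simp: key_less_def totalp_on_def total_on_def)
qed

lemma key_less_wage_le: "key_less r a b \<Longrightarrow> cW a \<le> cW b"
  by (auto simp: key_less_def)

lemma Yh_iff: "x \<in> Yh A h \<longleftrightarrow> x \<in> A \<and> cH x = h"
  by (simp add: Yh_def)

lemma Yh_subset: "Yh A h \<subseteq> A"
  by (auto simp: Yh_iff)

lemma Yh_mono: "A \<subseteq> C \<Longrightarrow> Yh A h \<subseteq> Yh C h"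
  by (auto simp: Yh_iff)

lemma Yd_iff: "x \<in> Yd A d \<longleftrightarrow> x \<in> A \<and> cD x = d"
  by (simp add: Yd_def)

locale proportional_market =
  fixes D :: "'d set" and H :: "'h set" and X :: "('d, 'h) contract set"
    and pref :: "'d \<Rightarrow> (('d, 'h) contract option \<times> ('d, 'h) contract option) set"
    and f :: "'h \<Rightarrow> ('d, 'h) contract set \<Rightarrow> real" and B :: "'h \<Rightarrow> real"
    and \<gamma> :: "'h \<Rightarrow> real"
    and tie :: "'h \<Rightarrow> (('d, 'h) contract \<times> ('d, 'h) contract) set"
  assumes mkt: "market D H X pref f B"
    and gamma_pos: "\<forall>h\<in>H. \<gamma> h > 0"
    and f_prop: "\<forall>h\<in>H. \<forall>Y. Y \<subseteq> Yh X h \<longrightarrow> f h Y = \<gamma> h * wh h Y"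
    and tie_order: "\<forall>h\<in>H. strict_linear_order_on (Yh X h) (tie h)"

begin

lemma finite_X: "finite X"
  using mkt by (simp add: market_def)

lemma budget_pos: "h \<in> H \<Longrightarrow> 0 < B h"
  using mkt by (simp add: market_def)

lemma X_doctor: "x \<in> X \<Longrightarrow> cD x \<in> D"
  using mkt by (auto simp: market_def cD_def)

lemma X_wage_pos: "x \<in> X \<Longrightarrow> 0 < cW x"
  using mkt by (simp add: market_def)

lemma X_wage_le_budget: "x \<in> X \<Longrightarrow> cW x \<le> B (cH x)"
  using mkt by (simp add: market_def)

lemma wages_mono:
  assumes "A \<subseteq> C" "C \<subseteq> X"
  shows "wages A \<le> wages C"
proof (rule sum_mono2)
  show "finite C"
    using assms(2) finite_X by (rule finite_subset)
  show "0 \<le> cW z" if "z \<in> C - A" for z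
    using that assms(2) X_wage_pos by (blast intro: less_imp_le)
qed (fact assms(1))

lemma tie_key_less:
  assumes "h \<in> H"
  shows "irreflp (key_less (tie h))" "transp (key_less (tie h))"
    "totalp_on (Yh X h) (key_less (tie h))"
  using key_less_strict_total tie_order assms by blast+

definition max_contract :: "'h \<Rightarrow> ('d, 'h) contract set \<Rightarrow> ('d, 'h) contract" where
  "max_contract h S = last (sort_by (key_less (tie h)) S)"

lemma sort_by_tie:
  assumes "h \<in> H" "S \<subseteq> Yh X h"
  shows "set (sort_by (key_less (tie h)) S) = S \<and> sorted_wrt (key_less (tie h)) (sort_by (key_less (tie h)) S)"
proof (rule sort_by_correct)
  show "finite S"
    using finite_subset[OF subset_trans[OF assms(2) Yh_subset] finite_X] .
  show "totalp_on S (key_less (tie h))"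
    using totalp_on_subset tie_key_less(3)[OF assms(1)] assms(2) by blast
qed (use tie_key_less[OF assms(1)] in auto)

lemma Chh_subset: "h \<in> H \<Longrightarrow> S \<subseteq> Yh X h \<Longrightarrow> Chh tie B h S \<subseteq> S"
  using greedy_subset sort_by_tie by (metis Chh_def)

lemma max_contract_in_Chh:
  "h \<in> H \<Longrightarrow> S \<subseteq> Yh X h \<Longrightarrow> S \<noteq> {} \<Longrightarrow> max_contract h S \<in> Chh tie B h S"
  using last_in_greedy sort_by_tie unfolding Chh_def max_contract_def by (metis set_empty)

lemma less_max_contract:
  assumes "h \<in> H" "S \<subseteq> Yh X h" "y \<in> S" "y \<noteq> max_contract h S"
  shows "key_less (tie h) y (max_contract h S)"
proof -
  let ?xs = "sort_by (key_less (tie h)) S"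
  have "set ?xs = S" "sorted_wrt (key_less (tie h)) ?xs"
    using sort_by_tie[OF assms(1,2)] by auto
  then show ?thesis
    using assms(3,4) unfolding max_contract_def
    by (cases ?xs rule: rev_cases) (auto simp: sorted_wrt_append)
qed

lemma Chh_wages_le:
  assumes "h \<in> H" "S \<subseteq> Yh X h"
  shows "wages (Chh tie B h S) \<le> 3/2 * B h"
proof (cases "S = {}")
  case True
  then show ?thesis
    using Chh_subset[OF assms] budget_pos[OF assms(1)] by simp
next
  case False
  have "max_contract h S \<in> Yh X h"
    using max_contract_in_Chh[OF assms False] Chh_subset[OF assms] assms(2) by blast
  then have "cW (max_contract h S) \<le> B h"
    using X_wage_le_budget[of "max_contract h S"] by (simp add: Yh_iff)
  then have "cW (max_contract h S) < 3/2 * B h"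
    using budget_pos[OF assms(1)] by simp
  then show ?thesis
    using greedy_wages_less False sort_by_tie[OF assms] unfolding Chh_def max_contract_def
    by (metis less_imp_le set_empty)
qed

lemma Chh_rejected:
  assumes "h \<in> H" "S \<subseteq> Yh X h" "y \<in> S - Chh tie B h S"
  shows "3/2 * B h \<le> cW y + cW (max_contract h S) + wages {z \<in> Chh tie B h S. key_less (tie h) z y}"
  using greedy_rejected[OF tie_key_less(1,2)[OF assms(1)]] sort_by_tie[OF assms(1,2)] assms(3)
  unfolding Chh_def max_contract_def by blast

lemma Chh_Yh_subset: "Y \<subseteq> X \<Longrightarrow> h \<in> H \<Longrightarrow> Chh tie B h (Yh Y h) \<subseteq> Yh Y h"
  by (simp add: Chh_subset Yh_mono)

lemma Yh_ChH:
  assumes "Y \<subseteq> X" "h \<in> H"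
  shows "Yh (ChH H tie B Y) h = Chh tie B h (Yh Y h)"
  using Chh_Yh_subset[OF assms(1)] assms(2) unfolding ChH_def Yh_def by blast

lemma ChH_subset: "Y \<subseteq> X \<Longrightarrow> ChH H tie B Y \<subseteq> Y"
  unfolding ChH_def using Chh_Yh_subset subset_trans[OF _ Yh_subset] by (meson UN_least)

section \<open>Outbid contracts\<close>

definition outbid :: "'h \<Rightarrow> ('d, 'h) contract set \<Rightarrow> ('d, 'h) contract \<Rightarrow> bool" where
  "outbid h G x \<longleftrightarrow> (\<exists>M\<in>G. key_less (tie h) x M \<and>
     3/2 * B h \<le> cW x + cW M + wages {z \<in> G. key_less (tie h) z x})"

lemma Chh_rejected_outbid:
  assumes "h \<in> H" "S \<subseteq> Yh X h" "x \<in> S - Chh tie B h S"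
  shows "outbid h (Chh tie B h S) x"
proof -
  have "max_contract h S \<in> Chh tie B h S"
    using max_contract_in_Chh assms by blast
  moreover have "key_less (tie h) x (max_contract h S)"
    using calculation assms(3) by (intro less_max_contract[OF assms(1,2)]) auto
  ultimately show ?thesis
    using Chh_rejected[OF assms] unfolding outbid_def by blast
qed

text \<open>The invariant survives a round of the mechanism because the new proposals contain
  the contracts held so far, and the largest proposal only grows.\<close>
lemma outbid_Chh:
  assumes h: "h \<in> H" and GS: "G \<subseteq> S" and S: "S \<subseteq> Yh X h" and x: "outbid h G x"
  shows "outbid h (Chh tie B h S) x"
proof -
  let ?lt = "key_less (tie h)" and ?C = "Chh tie B h S" and ?M' = "max_contract h S"
  obtain M where M: "M \<in> G" "?lt x M" "3/2 * B h \<le> cW x + cW M + wages {z \<in> G. ?lt z x}"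
    using x unfolding outbid_def by blast
  have "S \<noteq> {}"
    using M(1) GS by blast
  then have M': "?M' \<in> ?C"
    using max_contract_in_Chh h S by blast
  have "M = ?M' \<or> ?lt M ?M'"
    using less_max_contract h S M(1) GS by blast
  then have xM': "?lt x ?M'" and wM: "cW M \<le> cW ?M'"
    using M(2) transpD[OF tie_key_less(2)[OF h] M(2)] key_less_wage_le[of "tie h" M ?M']
    by (cases "M = ?M'"; simp)+
  have below_X: "{z \<in> ?C. ?lt z x} \<subseteq> X"
    using Chh_subset[OF h S] S Yh_subset[of X h] by blast
  have "3/2 * B h \<le> cW x + cW ?M' + wages {z \<in> ?C. ?lt z x}"
  proof (cases "\<exists>y\<in>S - ?C. ?lt y x")
    case True
    then obtain y where y: "y \<in> S - ?C" "?lt y x"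
      by blast
    have "{z \<in> ?C. ?lt z y} \<subseteq> {z \<in> ?C. ?lt z x}"
      using transpD[OF tie_key_less(2)[OF h] _ y(2)] by auto
    from wages_mono[OF this below_X] show ?thesis
      using Chh_rejected[OF h S y(1)] key_less_wage_le[OF y(2)] by linarith
  next
    case False
    then have "{z \<in> G. ?lt z x} \<subseteq> {z \<in> ?C. ?lt z x}"
      using GS by auto
    from wages_mono[OF this below_X] show ?thesis
      using M(3) wM by linarith
  qed
  then show ?thesis
    using M' xM' unfolding outbid_def by blast
qed

lemma outbid_heavy:
  assumes h: "h \<in> H" and G: "G \<subseteq> Yh X h" "wages G < B h" and x: "outbid h G x"
  shows "\<exists>M\<in>G. B h / 2 < cW x \<and> cW x \<le> cW M"
proof -
  let ?lt = "key_less (tie h)"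
  obtain M where M: "M \<in> G" "?lt x M" "3/2 * B h \<le> cW x + cW M + wages {z \<in> G. ?lt z x}"
    using x unfolding outbid_def by blast
  have GX: "G \<subseteq> X"
    using G(1) Yh_subset[of X h] by blast
  have "\<not> ?lt M x"
    using transpD[OF tie_key_less(2)[OF h] M(2)] irreflpD[OF tie_key_less(1)[OF h]] by blast
  moreover have "finite G"
    using finite_subset[OF GX finite_X] .
  ultimately have "cW M + wages {z \<in> G. ?lt z x} = wages (insert M {z \<in> G. ?lt z x})"
    by simp
  also have "\<dots> \<le> wages G"
  proof (rule wages_mono)
    show "insert M {z \<in> G. ?lt z x} \<subseteq> G"
      using M(1) by blast
  qed (fact GX)
  finally have "B h / 2 < cW x"
    using M(3) G(2) by linarith
  then show ?thesis
    using M(1) key_less_wage_le[OF M(2)] by blast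
qed

lemma pref_order:
  assumes "d \<in> D"
  shows "irrefl (pref d)" "trans (pref d)" "total_on (insert None (Some ` Yd X d)) (pref d)"
  using mkt assms by (simp_all add: market_def strict_linear_order_on_def)

lemma ChD_iff:
  "x \<in> ChD D pref A \<longleftrightarrow> cD x \<in> D \<and> x \<in> A \<and> (Some x, None) \<in> pref (cD x) \<and>
     (\<forall>y\<in>Yd A (cD x). y \<noteq> x \<longrightarrow> (Some x, Some y) \<in> pref (cD x))"
  unfolding ChD_def by (auto simp: Yd_iff)

lemma ChD_subset: "ChD D pref A \<subseteq> A"
  by (auto simp: ChD_iff)

lemma ChD_doctor_unique:
  assumes "x \<in> ChD D pref A" "y \<in> ChD D pref A" "cD x = cD y"
  shows "x = y"
proof (rule ccontr)
  assume "x \<noteq> y"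
  then have "(Some x, Some y) \<in> pref (cD x)" "(Some y, Some x) \<in> pref (cD x)"
    using assms unfolding ChD_iff by (auto simp: Yd_iff)
  moreover have "cD x \<in> D"
    using assms(1) ChD_iff by blast
  ultimately show False
    using pref_order by (meson irreflD transD)
qed

lemma cur_ChD: "y \<in> ChD D pref A \<Longrightarrow> cur (ChD D pref A) (cD y) = Some y"
proof -
  assume y: "y \<in> ChD D pref A"
  then have "Yd (ChD D pref A) (cD y) = {y}"
    using ChD_doctor_unique unfolding Yd_def by blast
  then show ?thesis
    by (simp add: cur_def)
qed

lemma ChD_matching: "A \<subseteq> X \<Longrightarrow> is_matching D (ChD D pref A)"
  unfolding is_matching_def
proof (intro conjI ballI)
  assume "A \<subseteq> X"
  then show fin: "finite (ChD D pref A)"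
    using ChD_subset finite_X finite_subset by metis
  fix d
  have "\<forall>x\<in>Yd (ChD D pref A) d. \<forall>y\<in>Yd (ChD D pref A) d. x = y"
    using ChD_doctor_unique unfolding Yd_def by blast
  moreover have "finite (Yd (ChD D pref A) d)"
    using fin by (simp add: Yd_def)
  ultimately show "card (Yd (ChD D pref A) d) \<le> 1"
    using card_le_Suc0_iff_eq by (metis One_nat_def)
qed (simp add: ChD_iff)

lemma ChD_nonempty:
  assumes A: "A \<subseteq> X" and d: "d \<in> D" and x: "x \<in> Yd A d" "(Some x, None) \<in> pref d"
  shows "Yd (ChD D pref A) d \<noteq> {}"
proof -
  let ?lt = "\<lambda>a b. (Some a, Some b) \<in> pref d"
  have lt: "irreflp ?lt" "transp ?lt"
    using pref_order(1,2)[OF d] by (auto simp: irreflp_def transp_def dest: irreflD transD)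
  have AX: "Yd A d \<subseteq> Yd X d"
    using A unfolding Yd_def by blast
  have "totalp_on (Yd A d) ?lt"
  proof (rule totalp_onI)
    fix a b assume "a \<in> Yd A d" "b \<in> Yd A d" "a \<noteq> b"
    then show "?lt a b \<or> ?lt b a"
      using pref_order(3)[OF d] AX unfolding total_on_def by blast
  qed
  moreover have "finite (Yd A d)"
    using finite_subset[OF AX] finite_X by (simp add: Yd_def)
  ultimately obtain a where a: "a \<in> Yd A d" "\<forall>b\<in>Yd A d. b \<noteq> a \<longrightarrow> ?lt a b"
    using exists_least_wrt[OF lt] x(1) by blast
  have "(Some a, None) \<in> pref d"
    using a x pref_order(2)[OF d] by (cases "a = x") (auto dest: transD)
  then have "a \<in> ChD D pref A"
    using a d unfolding ChD_iff by (auto simp: Yd_iff)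
  then show ?thesis
    using a(1) by (auto simp: Yd_iff)
qed

lemma not_prefers_over_ChD:
  assumes A: "A \<subseteq> X" and x: "x \<in> A"
  shows "(Some x, cur (ChD D pref A) (cD x)) \<notin> pref (cD x)"
proof
  let ?d = "cD x"
  assume pref_x: "(Some x, cur (ChD D pref A) ?d) \<in> pref ?d"
  have d: "?d \<in> D"
    using x A X_doctor by blast
  show False
  proof (cases "Yd (ChD D pref A) ?d = {}")
    case True
    then show False
      using ChD_nonempty[OF A d, of x] pref_x x by (simp add: cur_def Yd_iff)
  next
    case False
    then obtain y where y: "y \<in> ChD D pref A" "cD y = ?d"
      by (auto simp: Yd_iff)
    then have "(Some x, Some y) \<in> pref ?d"
      using pref_x cur_ChD by metis
    moreover from this have "(Some y, Some x) \<in> pref ?d"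
      using y x pref_order(1)[OF d] unfolding ChD_iff by (auto simp: Yd_iff dest: irreflD)
    ultimately show False
      using pref_order(1,2)[OF d] by (meson irreflD transD)
  qed
qed

section \<open>Deferred acceptance\<close>

abbreviation "rejected k \<equiv> DA_R D H X pref tie B k"
abbreviation "proposed k \<equiv> DA_Y D H X pref tie B k"
abbreviation "accepted k \<equiv> DA_Z D H X pref tie B k"

lemma rejected_Suc: "rejected (Suc k) = rejected k \<union> (proposed k - accepted k)"
  by (simp add: DA_Y_def DA_Z_def Let_def)

declare DA_R.simps(2) [simp del]

lemma proposed_subset: "proposed k \<subseteq> X - rejected k"
  unfolding DA_Y_def by (rule ChD_subset)

lemma proposed_subset_X: "proposed k \<subseteq> X"
  using proposed_subset by blast

lemma accepted_subset: "accepted k \<subseteq> proposed k"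
  unfolding DA_Z_def using ChH_subset proposed_subset by blast

lemma Yh_accepted: "h \<in> H \<Longrightarrow> Yh (accepted k) h = Chh tie B h (Yh (proposed k) h)"
  unfolding DA_Z_def using Yh_ChH proposed_subset by blast

lemma rejected_subset: "rejected k \<subseteq> X"
proof (induction k)
  case (Suc k)
  then show ?case
    unfolding rejected_Suc using proposed_subset[of k] by blast
qed simp

lemma mem_rejected: "x \<in> rejected k \<Longrightarrow> \<exists>j<k. x \<in> proposed j - accepted j"
proof (induction k)
  case (Suc k)
  then show ?case
    unfolding rejected_Suc using less_Suc_eq by blast
qed simp

text \<open>A doctor keeps proposing a contract that was accepted: it is still available and it
  remains her favourite among the fewer contracts not yet rejected.\<close>
lemma accepted_subset_proposed_Suc: "accepted k \<subseteq> proposed (Suc k)"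
proof
  fix x assume x: "x \<in> accepted k"
  then have "x \<in> ChD D pref (X - rejected k)"
    using accepted_subset unfolding DA_Y_def by blast
  moreover have "x \<notin> rejected (Suc k)"
    using x accepted_subset[of k] proposed_subset[of k] rejected_Suc[of k] by blast
  moreover have "Yd (X - rejected (Suc k)) d \<subseteq> Yd (X - rejected k) d" for d
    by (auto simp: Yd_iff rejected_Suc)
  ultimately show "x \<in> proposed (Suc k)"
    unfolding DA_Y_def ChD_iff by blast
qed

lemma DA_terminates: "\<exists>i. proposed i = accepted i"
proof (rule ccontr)
  assume "\<nexists>i. proposed i = accepted i"
  then have grow: "rejected k \<subset> rejected (Suc k)" for k
    using accepted_subset[of k] proposed_subset[of k] rejected_Suc[of k] by blast
  have "k \<le> card (rejected k)" for k
  proof (induction k)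
    case (Suc k)
    have "card (rejected k) < card (rejected (Suc k))"
      using psubset_card_mono[OF finite_subset[OF rejected_subset finite_X] grow] .
    then show ?case
      using Suc.IH by simp
  qed simp
  moreover have "card (rejected (Suc (card X))) \<le> card X"
    using card_mono[OF finite_X rejected_subset] .
  ultimately show False
    by (metis not_less_eq_eq)
qed

lemma outbid_after_rejection:
  assumes h: "h \<in> H" and x: "x \<in> Yh (proposed j) h - accepted j" and "j \<le> k"
  shows "outbid h (Yh (accepted k) h) x"
  using \<open>j \<le> k\<close>
proof (induction k rule: dec_induct)
  case base
  note Yh_mono[OF proposed_subset_X]
  moreover have "x \<notin> Chh tie B h (Yh (proposed j) h)"
    using x Yh_accepted[OF h, of j] Yh_subset[of "accepted j" h] by blast
  ultimately show ?case
    using Chh_rejected_outbid[OF h] x Yh_accepted[OF h] by auto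
next
  case (step n)
  have "outbid h (Chh tie B h (Yh (proposed (Suc n)) h)) x"
    using outbid_Chh[OF h Yh_mono[OF accepted_subset_proposed_Suc] Yh_mono[OF proposed_subset_X] step.IH] .
  then show ?case
    using Yh_accepted[OF h] by simp
qed

lemma outbid_at_fixed_point:
  assumes fixed: "proposed i = accepted i" and h: "h \<in> H"
    and x: "x \<in> Yh X h - proposed i" "(Some x, cur (proposed i) (cD x)) \<in> pref (cD x)"
  shows "outbid h (Yh (proposed i) h) x"
proof -
  have "x \<in> rejected i"
  proof (rule ccontr)
    assume "x \<notin> rejected i"
    then have "x \<in> X - rejected i"
      using x(1) Yh_subset[of X h] by blast
    then show False
      using not_prefers_over_ChD[OF Diff_subset] x(2) unfolding DA_Y_def by blast
  qed
  then obtain j where "j < i" "x \<in> proposed j - accepted j"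
    using mem_rejected by blast
  moreover have "cH x = h"
    using x(1) by (simp add: Yh_iff)
  ultimately have "outbid h (Yh (accepted i) h) x"
    using outbid_after_rejection[OF h, of x j i] by (simp add: Yh_iff)
  then show ?thesis
    using fixed by simp
qed

lemma no_blocking_at_fixed_point:
  assumes fixed: "proposed i = accepted i" and h: "h \<in> H"
  shows "\<not> blocks D X pref f (\<lambda>h. max (B h) (wh h (proposed i))) h Z (proposed i)"
proof
  let ?Y = "proposed i"
  let ?Yh = "Yh ?Y h"
  assume "blocks D X pref f (\<lambda>h. max (B h) (wh h ?Y)) h Z ?Y"
  then have Z: "Z \<subseteq> Yh X h" and prefers: "\<forall>x\<in>Z - ?Y. (Some x, cur ?Y (cD x)) \<in> pref (cD x)"
    and better: "f h ?Yh < f h Z" and Z_le: "wh h Z \<le> max (B h) (wh h ?Y)"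
    unfolding blocks_def by blast+
  have YhX: "?Yh \<subseteq> Yh X h"
    by (rule Yh_mono[OF proposed_subset_X])
  have "Yh Z h = Z"
    using Z unfolding Yh_def by blast
  then have whZ: "wh h Z = wages Z"
    by (simp add: wh_def)
  have whY: "wh h ?Yh = wages ?Yh" "wh h ?Y = wages ?Yh"
    by (simp_all add: wh_def Yh_def)
  have "\<gamma> h * wages ?Yh < \<gamma> h * wages Z"
    using better f_prop h Z YhX whZ whY by simp
  then have less: "wages ?Yh < wages Z"
    using gamma_pos h by (simp add: mult_less_cancel_left_pos)
  have "wages Z \<le> wages ?Yh"
  proof (cases "B h \<le> wages ?Yh")
    case True
    then show ?thesis
      using Z_le whZ whY by simp
  next
    case False
    have fin: "finite ?Yh" "finite Z"
      using finite_subset[OF _ finite_X] YhX Z Yh_subset[of X h] by blast+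
    show ?thesis
    proof (rule sum_le_if_heavy_newcomers[OF fin])
      show "wages Z \<le> B h"
        using Z_le whZ whY False by simp
      show "0 \<le> cW z" if "z \<in> ?Yh \<union> Z" for z
        using that YhX Z Yh_subset[of X h] X_wage_pos less_imp_le by blast
      fix x assume x: "x \<in> Z - ?Yh"
      then have "x \<in> Yh X h - ?Y"
        using Z unfolding Yh_def by blast
      then have "outbid h ?Yh x"
        using outbid_at_fixed_point[OF fixed h] prefers x by blast
      then show "\<exists>M\<in>?Yh. B h / 2 < cW x \<and> cW x \<le> cW M"
        using outbid_heavy[OF h YhX] False by simp
    qed
  qed
  with less show False
    by simp
qed

lemma stable_at_fixed_point:
  assumes fixed: "proposed i = accepted i"
  shows "\<exists>B'. (\<forall>h\<in>H. B h \<le> B' h \<and> B' h \<le> 3/2 * B h) \<and> stable D H X pref f B' (proposed i)"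
proof (intro exI conjI)
  let ?B' = "\<lambda>h. max (B h) (wh h (proposed i))"
  have "wh h (proposed i) \<le> 3/2 * B h" if "h \<in> H" for h
    using Chh_wages_le[OF that Yh_mono[OF proposed_subset_X[of i]]] Yh_accepted[OF that, of i]
    unfolding fixed wh_def by simp
  then show "\<forall>h\<in>H. B h \<le> ?B' h \<and> ?B' h \<le> 3/2 * B h"
    using budget_pos by force
  have "is_matching D (proposed i)"
    unfolding DA_Y_def by (rule ChD_matching) blast
  then have "feasible D H X ?B' (proposed i)"
    unfolding feasible_def using proposed_subset_X by simp
  then show "stable D H X pref f ?B' (proposed i)"
    unfolding stable_def using no_blocking_at_fixed_point[OF fixed] by blast
qed
end

theorem theorem7:
  fixes D :: "'d set" and H :: "'h set" and X :: "('d, 'h) contract set"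
    and pref :: "'d \<Rightarrow> (('d, 'h) contract option \<times> ('d, 'h) contract option) set"
    and f :: "'h \<Rightarrow> ('d, 'h) contract set \<Rightarrow> real" and B :: "'h \<Rightarrow> real"
    and \<gamma> :: "'h \<Rightarrow> real"
    and tie :: "'h \<Rightarrow> (('d, 'h) contract \<times> ('d, 'h) contract) set"
  assumes mkt: "market D H X pref f B"
    and gamma_pos: "\<forall>h\<in>H. \<gamma> h > 0"
    and f_prop: "\<forall>h\<in>H. \<forall>Y. Y \<subseteq> Yh X h \<longrightarrow> f h Y = \<gamma> h * wh h Y"
    and tie_order: "\<forall>h\<in>H. strict_linear_order_on (Yh X h) (tie h)"
  shows "\<exists>i. DA_Y D H X pref tie B i = DA_Z D H X pref tie B i \<and>
           (\<forall>j<i. DA_Y D H X pref tie B j \<noteq> DA_Z D H X pref tie B j) \<and>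
           (\<exists>B'. (\<forall>h\<in>H. B h \<le> B' h \<and> B' h \<le> 3/2 * B h) \<and>
                 stable D H X pref f B' (DA_Y D H X pref tie B i))"
proof -
  interpret proportional_market D H X pref f B \<gamma> tie
    using assms by unfold_locales
  define i where "i = (LEAST i. proposed i = accepted i)"
  have "proposed i = accepted i"
    unfolding i_def using DA_terminates by (rule LeastI_ex)
  moreover have "\<forall>j<i. proposed j \<noteq> accepted j"
    unfolding i_def using not_less_Least by blast
  ultimately show ?thesis
    using stable_at_fixed_point by blast
qed

end
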